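(* Let $\mu$ be a positive Borel measure on $\mathbb{C}$ with infinite support and finite moments, with moment matrix $\mathbf{M}=(c_{i,j})_{i,j\ge0}$, $c_{i,j}=\int z^i\bar z^j\,d\mu$, and assume $\lim_{n\to\infty} c_{n,n}^{1/(2n)}<\infty$. Let $\mathbf{M}'=(c_{i+1,j})_{i,j\ge0}$ be the infinite matrix obtained from $\mathbf{M}$ by removing its first row. Then $$\overline{\left\{\frac{v\mathbf{M}'v^*}{v\mathbf{M}v^*}: v\in c_{00}\setminus\{0\}\right\}}=\operatorname{Co}(\operatorname{supp}(\mu)).$$
   Context: $c_{00}$ is the space of complex row sequences with finitely many nonzero entries; $v^*$ denotes the conjugate transpose. $\operatorname{Co}(S)$ denotes the convex hull of $S\subset\mathbb{C}$. *)

theory Defs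
  imports "HOL-Analysis.Analysis"
begin

definition measure_support :: "complex measure \<Rightarrow> complex set" where
  "measure_support \<mu> = {z. \<forall>e>0. emeasure \<mu> (ball z e) > 0}"

definition cmoment :: "complex measure \<Rightarrow> nat \<Rightarrow> nat \<Rightarrow> complex" where
  "cmoment \<mu> i j = (LINT z|\<mu>. z ^ i * cnj z ^ j)"

definition c00 :: "(nat \<Rightarrow> complex) set" where
  "c00 = {v. finite {i. v i \<noteq> 0}}"

definition quad_form :: "(nat \<Rightarrow> nat \<Rightarrow> complex) \<Rightarrow> (nat \<Rightarrow> complex) \<Rightarrow> complex" where
  "quad_form A v = (\<Sum>i\<in>{i. v i \<noteq> 0}. \<Sum>j\<in>{j. v j \<noteq> 0}. v i * A i j * cnj (v j))"

end

theory Submission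
  imports Defs
begin

text \<open>Write \<open>p\<^sub>v(z) = \<Sum>\<^sub>i v\<^sub>i z\<^sup>i\<close>. Then \<open>v M v\<^sup>* = \<integral> |p\<^sub>v|\<^sup>2 d\<mu>\<close> and \<open>v M' v\<^sup>* = \<integral> z |p\<^sub>v|\<^sup>2 d\<mu>\<close>, so every
  quotient is the barycentre of the probability measure \<open>|p\<^sub>v|\<^sup>2 d\<mu> / \<integral> |p\<^sub>v|\<^sup>2 d\<mu>\<close>; the denominator is
  positive because an infinite support is not contained in the finitely many zeros of \<open>p\<^sub>v\<close>. The growth
  condition confines the support to a disc, so these barycentres lie in the convex hull of the
  support. Conversely, the set of quotients is convex by a Toeplitz--Hausdorff argument, and every
  open half-plane meeting the support contains a quotient: for \<open>p\<^sub>v = (K - (cnj a) z)\<^sup>n\<close> with \<open>K\<close> large the weight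
  \<open>|p\<^sub>v|\<^sup>2\<close> concentrates, as \<open>n \<rightarrow> \<infinity>\<close>, where \<open>\<langle>a, z\<rangle>\<close> is small. Separating hyperplanes then identify the
  closure of the quotients with the convex hull of the support.\<close>

section \<open>The support of a Borel measure on the complex plane\<close>

lemma compl_measure_support:
  assumes "sets \<mu> = sets borel"
  shows "- measure_support \<mu> = \<Union>{ball z e | z e. emeasure \<mu> (ball z e) = 0}"
proof (intro equalityI subsetI)
  fix x assume "x \<in> - measure_support \<mu>"
  then obtain e where "e > 0" "emeasure \<mu> (ball x e) = 0"
    by (auto simp: measure_support_def not_less)
  then show "x \<in> \<Union>{ball z e | z e. emeasure \<mu> (ball z e) = 0}" by force
next
  fix x assume "x \<in> \<Union>{ball z e | z e. emeasure \<mu> (ball z e) = 0}"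
  then obtain z e where x: "x \<in> ball z e" and null: "emeasure \<mu> (ball z e) = 0" by blast
  have "ball x (e - dist z x) \<subseteq> ball z e"
    by (simp add: ball_subset_ball_iff dist_commute)
  then have "emeasure \<mu> (ball x (e - dist z x)) = 0"
    using null emeasure_mono[of _ "ball z e" \<mu>] assms by simp
  moreover have "e - dist z x > 0" using x by simp
  ultimately show "x \<in> - measure_support \<mu>"
    unfolding measure_support_def by (auto simp: not_less intro!: exI[of _ "e - dist z x"])
qed

lemma closed_measure_support:
  assumes "sets \<mu> = sets borel"
  shows "closed (measure_support \<mu>)"
proof -
  have "open (- measure_support \<mu>)"
    unfolding compl_measure_support[OF assms] by (rule open_Union) auto
  then show ?thesis by (simp add: closed_def)
qed

lemma AE_measure_support:
  assumes sets: "sets \<mu> = sets borel"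
  shows "AE z in \<mu>. z \<in> measure_support \<mu>"
proof -
  define F where "F = {ball z e | z e. emeasure \<mu> (ball z e) = 0}"
  obtain F' where F': "F' \<subseteq> F" "countable F'" "\<Union>F' = \<Union>F"
    by (rule Lindelof[of F]) (auto simp: F_def)
  have "(\<Union>S\<in>F'. S) \<in> null_sets \<mu>"
    using F' sets by (intro null_sets_UN') (auto simp: F_def null_sets_def)
  moreover have "- measure_support \<mu> = (\<Union>S\<in>F'. S)"
    using F'(3) compl_measure_support[OF sets] by (simp add: F_def)
  ultimately show ?thesis
    by (metis (no_types, lifting) AE_I' ComplI mem_Collect_eq subsetI)
qed

lemma finite_measure_of_integrable_one:
  assumes "integrable \<mu> (\<lambda>_. 1 :: real)"
  shows "finite_measure \<mu>"
proof
  have "(\<integral>\<^sup>+ z. ennreal (norm (1 :: real)) \<partial>\<mu>) < \<infinity>"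
    using assms by (simp add: integrable_iff_bounded)
  then show "emeasure \<mu> (space \<mu>) \<noteq> \<infinity>" by simp
qed

lemma cmoment_diag: "cmoment \<mu> n n = of_real (\<integral>z. cmod z ^ (2 * n) \<partial>\<mu>)"
proof -
  have "z ^ n * cnj z ^ n = of_real (cmod z ^ (2 * n))" for z :: complex
    by (metis complex_norm_square power_mult power_mult_distrib of_real_power mult.commute)
  then show ?thesis
    unfolding cmoment_def by (simp add: integral_complex_of_real[symmetric])
qed

lemma measure_ball_le_moment:
  assumes "finite_measure \<mu>" "sets \<mu> = sets borel" "integrable \<mu> (\<lambda>z. cmod z ^ k)"
    and "0 \<le> \<rho>" "\<rho> \<le> cmod z0 - e"
  shows "\<rho> ^ k * measure \<mu> (ball z0 e) \<le> (\<integral>z. cmod z ^ k \<partial>\<mu>)"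
proof -
  interpret finite_measure \<mu> by fact
  have "\<rho> ^ k * indicator (ball z0 e) z \<le> cmod z ^ k" for z
  proof (cases "z \<in> ball z0 e")
    case True
    then have "\<rho> \<le> cmod z"
      using assms(5) norm_triangle_ineq2[of z0 z] by (simp add: dist_norm)
    then show ?thesis using True assms(4) by (simp add: power_mono)
  qed simp
  then have "(\<integral>z. \<rho> ^ k * indicator (ball z0 e) z \<partial>\<mu>) \<le> (\<integral>z. cmod z ^ k \<partial>\<mu>)"
    using assms(2,3) by (intro integral_mono integrable_mult_right integrable_indicator)
      (auto simp: emeasure_eq_measure)
  then show ?thesis using assms(2) by simp
qed

lemma measure_support_subset_cball:
  assumes fin: "finite_measure \<mu>" and sets: "sets \<mu> = sets borel"
    and moments: "\<forall>n. integrable \<mu> (\<lambda>z. cmod z ^ n)"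
    and lim: "(\<lambda>n. root (2 * n) (Re (cmoment \<mu> n n))) \<longlonglongrightarrow> L"
  shows "measure_support \<mu> \<subseteq> cball 0 L"
proof
  interpret finite_measure \<mu> by (rule fin)
  fix z0 assume z0: "z0 \<in> measure_support \<mu>"
  show "z0 \<in> cball 0 L"
  proof (rule ccontr)
    assume "z0 \<notin> cball 0 L"
    then have zL: "L < cmod z0" by simp
    have "L \<ge> 0"
      by (rule LIMSEQ_le_const[OF lim])
        (auto simp: cmoment_diag intro!: real_root_ge_zero integral_nonneg_AE)
    define e where "e = (cmod z0 - L) / 2"
    define \<rho> where "\<rho> = cmod z0 - e"
    have e: "e > 0" and \<rho>: "L < \<rho>" "0 < \<rho>"
      using zL \<open>L \<ge> 0\<close> by (auto simp: e_def \<rho>_def field_simps)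
    define m where "m = measure \<mu> (ball z0 e)"
    have m: "m > 0"
      using z0 e by (auto simp: measure_support_def m_def emeasure_eq_measure)
    have "\<rho> * root (2 * n) m \<le> root (2 * n) (Re (cmoment \<mu> n n))" if "n \<ge> 1" for n
    proof -
      have "root (2 * n) (\<rho> ^ (2 * n) * m) \<le> root (2 * n) (Re (cmoment \<mu> n n))"
        using that measure_ball_le_moment[OF fin sets moments[rule_format, of "2 * n"], of \<rho> z0 e] \<rho>
        by (simp add: cmoment_diag m_def \<rho>_def)
      then show ?thesis
        using that \<rho> by (simp add: real_root_mult real_root_power_cancel)
    qed
    moreover have "(\<lambda>n. root (2 * n) m) \<longlonglongrightarrow> 1"
      using LIMSEQ_root_const[OF m] filterlim_subseq[of "\<lambda>n::nat. 2 * n"]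
      by (auto simp: strict_mono_def intro: filterlim_compose)
    ultimately have "\<rho> * 1 \<le> L"
      by (intro LIMSEQ_le[OF tendsto_mult[OF tendsto_const] lim]) auto
    then show False using \<rho> by simp
  qed
qed

section \<open>Polynomials with coefficients in \<open>c\<^sub>0\<^sub>0\<close>\<close>

definition c00_poly :: "(nat \<Rightarrow> complex) \<Rightarrow> complex \<Rightarrow> complex" where
  "c00_poly v z = (\<Sum>i\<in>{i. v i \<noteq> 0}. v i * z ^ i)"

lemma c00_poly_eq_sum:
  assumes "{i. v i \<noteq> 0} \<subseteq> {..<n}"
  shows "c00_poly v z = (\<Sum>i<n. v i * z ^ i)"
  unfolding c00_poly_def using assms by (intro sum.mono_neutral_left) auto

lemma continuous_on_c00_poly [continuous_intros]:
  "continuous_on S f \<Longrightarrow> continuous_on S (\<lambda>z. c00_poly v (f z))"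
  unfolding c00_poly_def by (intro continuous_intros)

lemma c00_lincomb:
  assumes "x \<in> c00" "y \<in> c00"
  shows "(\<lambda>i. a * x i + b * y i) \<in> c00"
proof -
  have "{i. a * x i + b * y i \<noteq> 0} \<subseteq> {i. x i \<noteq> 0} \<union> {i. y i \<noteq> 0}" by auto
  then show ?thesis using assms unfolding c00_def by (auto intro: finite_subset)
qed

lemma c00_poly_lincomb:
  assumes "x \<in> c00" "y \<in> c00"
  shows "c00_poly (\<lambda>i. a * x i + b * y i) z = a * c00_poly x z + b * c00_poly y z"
proof -
  have "finite ({i. x i \<noteq> 0} \<union> {i. y i \<noteq> 0})" using assms by (simp add: c00_def)
  then obtain n where "{i. x i \<noteq> 0} \<union> {i. y i \<noteq> 0} \<subseteq> {..<n}"
    by (metis finite_nat_iff_bounded)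
  moreover have "{i. a * x i + b * y i \<noteq> 0} \<subseteq> {i. x i \<noteq> 0} \<union> {i. y i \<noteq> 0}" by auto
  ultimately have "{i. x i \<noteq> 0} \<subseteq> {..<n}" "{i. y i \<noteq> 0} \<subseteq> {..<n}"
    "{i. a * x i + b * y i \<noteq> 0} \<subseteq> {..<n}" by auto
  then show ?thesis
    by (simp add: c00_poly_eq_sum sum.distrib sum_distrib_left algebra_simps)
qed

definition rotated_segment :: "(nat \<Rightarrow> complex) \<Rightarrow> (nat \<Rightarrow> complex) \<Rightarrow> complex \<Rightarrow> real \<Rightarrow> nat \<Rightarrow> complex"
  where "rotated_segment x y c s = (\<lambda>i. of_real (1 - s) * x i + (of_real s * c) * y i)"

lemma finite_c00_poly_roots:
  assumes "v \<in> c00" "v \<noteq> (\<lambda>_. 0)"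
  shows "finite {z. c00_poly v z = 0}"
proof -
  obtain n where "{i. v i \<noteq> 0} \<subseteq> {..<n}"
    using assms(1) by (auto simp: c00_def finite_nat_iff_bounded)
  then have n: "{i. v i \<noteq> 0} \<subseteq> {..<Suc n}" by auto
  obtain k where "v k \<noteq> 0" using assms(2) by auto
  with n have "finite {z. (\<Sum>i\<le>n. v i * z ^ i) = 0}"
    by (intro polyfun_roots_finite) auto
  then show ?thesis
    using c00_poly_eq_sum[OF n] by (simp add: lessThan_Suc_atMost)
qed

lemma c00_poly_binomial:
  fixes K c :: complex
  assumes "K \<noteq> 0"
  obtains v where "v \<in> c00" "v \<noteq> (\<lambda>_. 0)" "\<And>z. c00_poly v z = (K - c * z) ^ n"
proof -
  define v where "v i = (if i \<le> n then of_nat (n choose i) * (- c) ^ i * K ^ (n - i) else 0)" for i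
  have sub: "{i. v i \<noteq> 0} \<subseteq> {..<Suc n}" by (auto simp: v_def)
  then have "v \<in> c00" unfolding c00_def using finite_subset by auto
  moreover have "v 0 \<noteq> 0" using assms by (simp add: v_def)
  then have "v \<noteq> (\<lambda>_. 0)" by auto
  moreover have "c00_poly v z = (K - c * z) ^ n" for z
  proof -
    have "c00_poly v z = (\<Sum>i\<le>n. of_nat (n choose i) * (- c * z) ^ i * K ^ (n - i))"
      unfolding c00_poly_eq_sum[OF sub] lessThan_Suc_atMost
    proof (rule sum.cong[OF refl])
      fix i assume "i \<in> {..n}"
      then have "v i * z ^ i = of_nat (n choose i) * ((- c) ^ i * z ^ i) * K ^ (n - i)"
        by (simp add: v_def mult_ac)
      then show "v i * z ^ i = of_nat (n choose i) * (- c * z) ^ i * K ^ (n - i)"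
        by (simp only: power_mult_distrib)
    qed
    also have "\<dots> = (- c * z + K) ^ n" by (rule binomial_ring[symmetric])
    finally show ?thesis by simp
  qed
  ultimately show ?thesis using that by blast
qed

section \<open>Concentration of power weights\<close>

lemma (in finite_measure) integral_mult_power_neg:
  fixes f q :: "'a \<Rightarrow> real"
  assumes int: "\<And>n. integrable M (\<lambda>x. f x * q x ^ n)"
    and U: "U \<in> sets M" "measure M U > 0"
    and \<alpha>\<beta>: "0 \<le> \<beta>" "\<beta> < \<alpha>" and \<delta>: "\<delta> > 0"
    and AE: "AE x in M. 0 \<le> q x \<and> f x \<le> C \<and> (x \<in> U \<longrightarrow> f x \<le> - \<delta> \<and> \<alpha> \<le> q x)
                        \<and> (0 < f x \<longrightarrow> q x \<le> \<beta>)"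
  shows "\<exists>n. (\<integral>x. f x * q x ^ n \<partial>M) < 0"
proof -
  define C' where "C' = max C 0"
  define m where "m = measure M U"
  have "(\<lambda>n. C' * measure M (space M) * (\<beta> / \<alpha>) ^ n) \<longlonglongrightarrow> C' * measure M (space M) * 0"
    using \<alpha>\<beta> by (intro tendsto_mult_left LIMSEQ_power_zero) auto
  moreover have "\<delta> * m > 0" using U \<delta> by (simp add: m_def)
  ultimately have "eventually (\<lambda>n. C' * measure M (space M) * (\<beta> / \<alpha>) ^ n < \<delta> * m) sequentially"
    by (intro order_tendstoD(2)) auto
  then obtain n where n: "C' * measure M (space M) * (\<beta> / \<alpha>) ^ n < \<delta> * m"
    by (meson eventually_sequentially order_refl)
  have bound: "AE x in M. f x * q x ^ n \<le> - \<delta> * \<alpha> ^ n * indicator U x + C' * \<beta> ^ n"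
    using AE
  proof eventually_elim
    case (elim x)
    have "0 \<le> C' * \<beta> ^ n" using \<alpha>\<beta> by (simp add: C'_def)
    show ?case
    proof (cases "x \<in> U")
      case True
      have "f x * q x ^ n \<le> - \<delta> * q x ^ n"
        using elim True by (intro mult_right_mono) auto
      also have "\<dots> \<le> - \<delta> * \<alpha> ^ n"
        using elim True \<alpha>\<beta> \<delta> by (simp add: power_mono)
      finally have "f x * q x ^ n \<le> - \<delta> * \<alpha> ^ n" .
      then show ?thesis using True \<open>0 \<le> C' * \<beta> ^ n\<close> by simp
    next
      case False
      have "f x * q x ^ n \<le> C' * \<beta> ^ n"
      proof (cases "0 < f x")
        case True
        then have "q x ^ n \<le> \<beta> ^ n" using elim by (intro power_mono) auto
        then show ?thesis using elim True
          by (intro mult_mono) (auto simp: C'_def)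
      next
        case False
        then have "f x * q x ^ n \<le> 0" using elim by (intro mult_nonpos_nonneg) auto
        then show ?thesis using \<open>0 \<le> C' * \<beta> ^ n\<close> by linarith
      qed
      then show ?thesis using False by simp
    qed
  qed
  have "(\<integral>x. f x * q x ^ n \<partial>M) \<le> (\<integral>x. - \<delta> * \<alpha> ^ n * indicator U x + C' * \<beta> ^ n \<partial>M)"
    using U int bound by (intro integral_mono_AE) (auto simp: emeasure_eq_measure)
  also have "\<dots> = \<alpha> ^ n * (C' * measure M (space M) * (\<beta> / \<alpha>) ^ n - \<delta> * m)"
    using U \<alpha>\<beta>
    by (subst Bochner_Integration.integral_add)
       (auto simp: m_def emeasure_eq_measure power_divide field_simps)
  also have "\<dots> < 0" using n \<alpha>\<beta> by (intro mult_pos_neg) auto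
  finally show ?thesis by blast
qed

lemma cmod_of_real_diff_cnj_mult_square:
  "cmod (of_real K - cnj a * z) ^ 2 = (K - inner a z)\<^sup>2 + (Im (cnj a * z))\<^sup>2"
  by (simp add: cmod_power2 inner_complex_def power2_commute)

text \<open>With this \<open>K\<close>, the weight \<open>|K - (cnj a) z|\<^sup>2\<close> on the disc is strictly larger near \<open>s\<close> than anywhere
  on the side \<open>\<langle>a, z\<rangle> > b\<close>.\<close>
lemma peak_weight_bounds:
  fixes a s z :: complex and b L :: real
  assumes z: "cmod z \<le> L" and s: "inner a s < b"
  defines "\<delta> \<equiv> b - inner a s" and "T \<equiv> cmod a * L"
  defines "K \<equiv> \<bar>b\<bar> + T + T\<^sup>2 / \<delta> + 1" and "\<epsilon> \<equiv> \<delta> / (2 * (cmod a + 1))"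
  shows "inner a z - b \<le> T + \<bar>b\<bar>"
    and "z \<in> ball s \<epsilon> \<Longrightarrow> inner a z - b \<le> - (\<delta> / 2) \<and> (K - b + \<delta> / 2)\<^sup>2 \<le> cmod (of_real K - cnj a * z) ^ 2"
    and "0 < inner a z - b \<Longrightarrow> cmod (of_real K - cnj a * z) ^ 2 \<le> (K - b)\<^sup>2 + T\<^sup>2"
    and "(K - b)\<^sup>2 + T\<^sup>2 < (K - b + \<delta> / 2)\<^sup>2"
proof -
  have \<delta>: "\<delta> > 0" using s by (simp add: \<delta>_def)
  have T: "T \<ge> 0" using z by (simp add: T_def order_trans[OF norm_ge_zero z])
  have inner_bound: "\<bar>inner a z\<bar> \<le> T"
    using Cauchy_Schwarz_ineq2[of a z] z
    by (simp add: T_def) (meson norm_ge_zero mult_left_mono order_trans)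
  then show "inner a z - b \<le> T + \<bar>b\<bar>" by linarith
  have "\<bar>Im (cnj a * z)\<bar> \<le> T"
    using abs_Im_le_cmod[of "cnj a * z"] z
    by (simp add: T_def norm_mult) (meson norm_ge_zero mult_left_mono order_trans)
  then have Im: "(Im (cnj a * z))\<^sup>2 \<le> T\<^sup>2"
    by (metis abs_ge_zero power2_abs power_mono)
  note q = cmod_of_real_diff_cnj_mult_square[of K a z]
  have Kb: "K - b \<ge> T\<^sup>2 / \<delta> + 1" using T by (simp add: K_def)
  have "T\<^sup>2 / \<delta> \<ge> 0" using \<delta> by simp
  show "cmod (of_real K - cnj a * z) ^ 2 \<le> (K - b)\<^sup>2 + T\<^sup>2" if "0 < inner a z - b"
  proof -
    have "0 \<le> K - inner a z" "K - inner a z \<le> K - b"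
      using that inner_bound \<open>T\<^sup>2 / \<delta> \<ge> 0\<close> by (auto simp: K_def)
    then have "(K - inner a z)\<^sup>2 \<le> (K - b)\<^sup>2" by (auto intro!: power_mono)
    then show ?thesis using q Im by linarith
  qed
  have "\<delta> * (T\<^sup>2 / \<delta> + 1) \<le> \<delta> * (K - b)"
    using Kb \<delta> by (intro mult_left_mono) auto
  moreover have "\<delta> * (T\<^sup>2 / \<delta> + 1) = T\<^sup>2 + \<delta>" using \<delta> by (simp add: field_simps)
  ultimately have "T\<^sup>2 < \<delta> * (K - b)" using \<delta> by linarith
  moreover have "(K - b + \<delta> / 2)\<^sup>2 = (K - b)\<^sup>2 + \<delta> * (K - b) + \<delta>\<^sup>2 / 4"
    by (simp add: power2_eq_square field_simps)
  moreover have "\<delta>\<^sup>2 / 4 \<ge> 0" by simp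
  ultimately show "(K - b)\<^sup>2 + T\<^sup>2 < (K - b + \<delta> / 2)\<^sup>2" by linarith
  assume "z \<in> ball s \<epsilon>"
  then have "inner a (z - s) \<le> cmod a * \<epsilon>"
    using Cauchy_Schwarz_ineq2[of a "z - s"]
    by (simp add: dist_norm norm_minus_commute) (smt (verit) mult_left_mono norm_ge_zero)
  also have "\<dots> = \<delta> / 2 * (cmod a / (cmod a + 1))"
    by (simp add: \<epsilon>_def)
  also have "\<dots> \<le> \<delta> / 2 * 1"
    using \<delta> by (intro mult_left_mono) (auto simp: divide_le_eq add_nonneg_pos)
  also have "\<dots> = \<delta> / 2" by simp
  finally have "inner a z - b \<le> - (\<delta> / 2)"
    by (simp add: inner_diff_right \<delta>_def field_simps)
  moreover have "K - b + \<delta> / 2 \<le> K - inner a z" using calculation by linarith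
  moreover have "0 \<le> K - b + \<delta> / 2" using Kb \<delta> \<open>T\<^sup>2 / \<delta> \<ge> 0\<close> by linarith
  ultimately show "inner a z - b \<le> - (\<delta> / 2) \<and> (K - b + \<delta> / 2)\<^sup>2 \<le> cmod (of_real K - cnj a * z) ^ 2"
    using q by (smt (verit) power_mono zero_le_power2)
qed

lemma exists_unimodular_rotation_real:
  fixes \<gamma> :: complex
  obtains c where "c * cnj c = 1" "Im (cnj c * \<gamma>) = 0"
proof (cases "\<gamma> = 0")
  case True
  then show ?thesis by (intro that[of 1]) simp_all
next
  case False
  define c where "c = \<gamma> / of_real (cmod \<gamma>)"
  have g: "\<gamma> * cnj \<gamma> = of_real (cmod \<gamma>) * of_real (cmod \<gamma>)"
    by (metis complex_norm_square of_real_mult power2_eq_square)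
  show ?thesis
  proof (rule that)
    show "c * cnj c = 1" using False by (simp add: c_def g)
    have "cnj c * \<gamma> = of_real (cmod \<gamma>)" using False by (simp add: c_def g mult.commute)
    then show "Im (cnj c * \<gamma>) = 0" by simp
  qed
qed

section \<open>Rayleigh quotients of a compactly supported measure\<close>

locale moment_measure = finite_measure \<mu> for \<mu> :: "complex measure" +
  assumes sets_eq_borel [simp]: "sets \<mu> = sets borel"
    and bounded_support: "bounded (measure_support \<mu>)"
    and infinite_support: "infinite (measure_support \<mu>)"
begin

lemma compact_support: "compact (measure_support \<mu>)"
  using bounded_support closed_measure_support[OF sets_eq_borel]
  by (simp add: compact_eq_bounded_closed)

lemma integrable_continuous:
  fixes f :: "complex \<Rightarrow> 'b::{banach,second_countable_topology}"
  assumes "continuous_on UNIV f"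
  shows "integrable \<mu> f"
proof -
  have "compact (f ` measure_support \<mu>)"
    by (rule compact_continuous_image[OF continuous_on_subset[OF assms subset_UNIV] compact_support])
  then obtain B where B: "\<forall>y\<in>f ` measure_support \<mu>. norm y \<le> B"
    using compact_imp_bounded bounded_iff by blast
  have "AE z in \<mu>. norm (f z) \<le> B"
    using AE_measure_support[OF sets_eq_borel] by eventually_elim (use B in auto)
  moreover have "f \<in> borel_measurable \<mu>"
    unfolding measurable_cong_sets[OF sets_eq_borel refl]
    by (rule borel_measurable_continuous_onI[OF assms])
  ultimately show ?thesis by (intro integrable_const_bound)
qed

lemma integral_pos_at_support_point:
  fixes g :: "complex \<Rightarrow> real"
  assumes "continuous_on UNIV g" "\<And>z. g z \<ge> 0"
    and "z0 \<in> measure_support \<mu>" "g z0 > 0"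
  shows "(\<integral>z. g z \<partial>\<mu>) > 0"
proof -
  have "open {z. g z0 / 2 < g z}"
    using assms(1) by (intro open_Collect_less continuous_intros)
  moreover have "z0 \<in> {z. g z0 / 2 < g z}" using assms(4) by simp
  ultimately obtain e where e: "e > 0" "ball z0 e \<subseteq> {z. g z0 / 2 < g z}"
    by (meson open_contains_ball)
  then have m: "measure \<mu> (ball z0 e) > 0"
    using assms(3) by (auto simp: measure_support_def emeasure_eq_measure)
  have "g z0 / 2 * indicator (ball z0 e) z \<le> g z" for z
    using e(2) assms(2)[of z] by (cases "z \<in> ball z0 e") auto
  then have "(\<integral>z. g z0 / 2 * indicator (ball z0 e) z \<partial>\<mu>) \<le> (\<integral>z. g z \<partial>\<mu>)"
    using integrable_continuous[OF assms(1)]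
    by (intro integral_mono integrable_mult_right integrable_indicator) (auto simp: emeasure_eq_measure)
  moreover have "(\<integral>z. g z0 / 2 * indicator (ball z0 e) z \<partial>\<mu>) > 0"
    using m assms(4) by simp
  ultimately show ?thesis by linarith
qed

definition poly_inner :: "(complex \<Rightarrow> complex) \<Rightarrow> (nat \<Rightarrow> complex) \<Rightarrow> (nat \<Rightarrow> complex) \<Rightarrow> complex"
  where "poly_inner \<psi> x y = (\<integral>z. \<psi> z * c00_poly x z * cnj (c00_poly y z) \<partial>\<mu>)"

definition poly_norm2 :: "(nat \<Rightarrow> complex) \<Rightarrow> real"
  where "poly_norm2 v = (\<integral>z. cmod (c00_poly v z) ^ 2 \<partial>\<mu>)"

definition rayleigh :: "(nat \<Rightarrow> complex) \<Rightarrow> complex"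
  where "rayleigh v = poly_inner (\<lambda>z. z) v v / of_real (poly_norm2 v)"

lemma integrable_poly_weight:
  "continuous_on UNIV \<psi> \<Longrightarrow> integrable \<mu> (\<lambda>z. \<psi> z * c00_poly x z * cnj (c00_poly y z))"
  by (intro integrable_continuous continuous_intros)

lemma quad_form_moments:
  assumes "v \<in> c00" "continuous_on UNIV \<psi>"
  shows "quad_form (\<lambda>i j. \<integral>z. \<psi> z * (z ^ i * cnj z ^ j) \<partial>\<mu>) v = poly_inner \<psi> v v"
proof -
  define S where "S = {i. v i \<noteq> 0}"
  have "finite S" using assms(1) by (simp add: S_def c00_def)
  have "\<psi> z * c00_poly v z * cnj (c00_poly v z)
      = (\<Sum>i\<in>S. \<Sum>j\<in>S. v i * (\<psi> z * (z ^ i * cnj z ^ j)) * cnj (v j))" for z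
    unfolding c00_poly_def S_def[symmetric]
    by (simp add: sum_distrib_left sum_distrib_right algebra_simps)
  then have "poly_inner \<psi> v v
      = (\<integral>z. (\<Sum>i\<in>S. \<Sum>j\<in>S. v i * (\<psi> z * (z ^ i * cnj z ^ j)) * cnj (v j)) \<partial>\<mu>)"
    by (simp add: poly_inner_def)
  also have "\<dots> = (\<Sum>i\<in>S. \<Sum>j\<in>S. v i * (\<integral>z. \<psi> z * (z ^ i * cnj z ^ j) \<partial>\<mu>) * cnj (v j))"
    using assms(2)
    by (simp add: integrable_continuous continuous_intros integrable_sum)
  finally show ?thesis by (simp add: quad_form_def S_def)
qed

lemma poly_inner_weight_lincomb:
  assumes "continuous_on UNIV \<psi>" "continuous_on UNIV \<phi>"
  shows "poly_inner (\<lambda>z. a * \<psi> z + b * \<phi> z) x y = a * poly_inner \<psi> x y + b * poly_inner \<phi> x y"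
proof -
  define f where "f \<psi> z = \<psi> z * c00_poly x z * cnj (c00_poly y z)" for \<psi> :: "complex \<Rightarrow> complex" and z
  have "poly_inner (\<lambda>z. a * \<psi> z + b * \<phi> z) x y = (\<integral>z. a * f \<psi> z + b * f \<phi> z \<partial>\<mu>)"
    unfolding poly_inner_def f_def by (simp add: algebra_simps)
  also have "\<dots> = a * (\<integral>z. f \<psi> z \<partial>\<mu>) + b * (\<integral>z. f \<phi> z \<partial>\<mu>)"
    using integrable_poly_weight[OF assms(1)] integrable_poly_weight[OF assms(2)]
    unfolding f_def by (subst Bochner_Integration.integral_add) auto
  finally show ?thesis by (simp add: poly_inner_def f_def)
qed

lemma poly_inner_lincomb:
  fixes \<alpha> \<beta> :: complex
  assumes "x \<in> c00" "y \<in> c00" "continuous_on UNIV \<psi>"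
  defines "v \<equiv> \<lambda>i. \<alpha> * x i + \<beta> * y i"
  shows "poly_inner \<psi> v v = \<alpha> * cnj \<alpha> * poly_inner \<psi> x x + \<alpha> * cnj \<beta> * poly_inner \<psi> x y
           + cnj \<alpha> * \<beta> * poly_inner \<psi> y x + \<beta> * cnj \<beta> * poly_inner \<psi> y y"
proof -
  define f where "f x y z = \<psi> z * c00_poly x z * cnj (c00_poly y z)" for x y z
  have int: "integrable \<mu> (f x' y')" for x' y'
    unfolding f_def by (rule integrable_poly_weight[OF assms(3)])
  have "f v v z = \<alpha> * cnj \<alpha> * f x x z + \<alpha> * cnj \<beta> * f x y z + cnj \<alpha> * \<beta> * f y x z
                   + \<beta> * cnj \<beta> * f y y z" for z
    unfolding f_def v_def c00_poly_lincomb[OF assms(1,2)] by (simp add: algebra_simps)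
  then have "poly_inner \<psi> v v = (\<integral>z. \<alpha> * cnj \<alpha> * f x x z + \<alpha> * cnj \<beta> * f x y z
                   + cnj \<alpha> * \<beta> * f y x z + \<beta> * cnj \<beta> * f y y z \<partial>\<mu>)"
    by (simp add: poly_inner_def f_def)
  also have "\<dots> = \<alpha> * cnj \<alpha> * integral\<^sup>L \<mu> (f x x) + \<alpha> * cnj \<beta> * integral\<^sup>L \<mu> (f x y)
                   + cnj \<alpha> * \<beta> * integral\<^sup>L \<mu> (f y x) + \<beta> * cnj \<beta> * integral\<^sup>L \<mu> (f y y)"
    using int by simp
  finally show ?thesis unfolding poly_inner_def f_def[abs_def] .
qed

lemma poly_inner_one: "poly_inner (\<lambda>_. 1) v v = of_real (poly_norm2 v)"
  by (simp add: poly_inner_def poly_norm2_def complex_norm_square[symmetric] del: of_real_power)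

lemma Re_poly_inner:
  assumes "continuous_on UNIV \<psi>"
  shows "Re (poly_inner \<psi> v v) = (\<integral>z. Re (\<psi> z) * cmod (c00_poly v z) ^ 2 \<partial>\<mu>)"
proof -
  have "Re (poly_inner \<psi> v v) = (\<integral>z. Re (\<psi> z * c00_poly v z * cnj (c00_poly v z)) \<partial>\<mu>)"
    unfolding poly_inner_def by (rule integral_Re[symmetric, OF integrable_poly_weight[OF assms]])
  also have "\<dots> = (\<integral>z. Re (\<psi> z) * cmod (c00_poly v z) ^ 2 \<partial>\<mu>)"
  proof (intro Bochner_Integration.integral_cong refl)
    fix z
    have "\<psi> z * c00_poly v z * cnj (c00_poly v z) = cmod (c00_poly v z) ^ 2 *\<^sub>R \<psi> z"
      by (simp only: scaleR_conv_of_real complex_norm_square mult_ac)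
    then show "Re (\<psi> z * c00_poly v z * cnj (c00_poly v z)) = Re (\<psi> z) * cmod (c00_poly v z) ^ 2"
      by simp
  qed
  finally show ?thesis .
qed

lemma poly_norm2_pos:
  assumes "v \<in> c00" "v \<noteq> (\<lambda>_. 0)"
  shows "poly_norm2 v > 0"
proof -
  have "\<not> measure_support \<mu> \<subseteq> {z. c00_poly v z = 0}"
    using infinite_support finite_c00_poly_roots[OF assms] finite_subset by blast
  then obtain z0 where "z0 \<in> measure_support \<mu>" "c00_poly v z0 \<noteq> 0" by blast
  moreover have "continuous_on UNIV (\<lambda>z. cmod (c00_poly v z) ^ 2)"
    by (intro continuous_intros)
  ultimately show ?thesis
    unfolding poly_norm2_def by (intro integral_pos_at_support_point[of _ z0]) auto
qed

lemma rayleigh_affine: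
  assumes "v \<in> c00" "v \<noteq> (\<lambda>_. 0)"
  shows "a * rayleigh v + b = poly_inner (\<lambda>z. a * z + b) v v / of_real (poly_norm2 v)"
proof -
  have "poly_inner (\<lambda>z. a * z + b * 1) v v = a * poly_inner (\<lambda>z. z) v v + b * of_real (poly_norm2 v)"
    using poly_inner_weight_lincomb[of "\<lambda>z. z" "\<lambda>_. 1" a b v v]
    by (simp add: continuous_on_id poly_inner_one)
  then show ?thesis
    using poly_norm2_pos[OF assms] by (simp add: rayleigh_def field_simps)
qed

lemma inner_rayleigh:
  assumes "v \<in> c00" "v \<noteq> (\<lambda>_. 0)"
  shows "inner a (rayleigh v) - b
           = (\<integral>z. (inner a z - b) * cmod (c00_poly v z) ^ 2 \<partial>\<mu>) / poly_norm2 v"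
proof -
  have "inner a (rayleigh v) - b = Re (cnj a * rayleigh v + - b)"
    by (simp add: inner_complex_def)
  also have "\<dots> = Re (poly_inner (\<lambda>z. cnj a * z + - b) v v) / poly_norm2 v"
    by (simp only: rayleigh_affine[OF assms] Re_divide_of_real)
  also have "\<dots> = (\<integral>z. (inner a z - b) * cmod (c00_poly v z) ^ 2 \<partial>\<mu>) / poly_norm2 v"
    by (subst Re_poly_inner) (auto simp: inner_complex_def intro: continuous_intros)
  finally show ?thesis .
qed

lemma rayleigh_in_convex_hull:
  assumes "v \<in> c00" "v \<noteq> (\<lambda>_. 0)"
  shows "rayleigh v \<in> convex hull measure_support \<mu>"
proof (rule ccontr)
  assume "rayleigh v \<notin> convex hull measure_support \<mu>"
  then have "\<exists>a b. inner a (rayleigh v) < b \<and> (\<forall>x\<in>convex hull measure_support \<mu>. b < inner a x)"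
    by (rule separating_hyperplane_closed_point[OF convex_convex_hull
          compact_imp_closed[OF compact_convex_hull[OF compact_support]]])
  then obtain a b where ab: "inner a (rayleigh v) < b"
    "\<forall>x\<in>convex hull measure_support \<mu>. b < inner a x"
    by blast
  have "AE z in \<mu>. 0 \<le> (inner a z - b) * cmod (c00_poly v z) ^ 2"
    using AE_measure_support[OF sets_eq_borel]
  proof eventually_elim
    case (elim z)
    then have "b < inner a z" using ab(2) by (simp add: hull_inc)
    then show ?case by simp
  qed
  then have "0 \<le> (\<integral>z. (inner a z - b) * cmod (c00_poly v z) ^ 2 \<partial>\<mu>)"
    by (rule integral_nonneg_AE)
  then have "0 \<le> inner a (rayleigh v) - b"
    unfolding inner_rayleigh[OF assms] using poly_norm2_pos[OF assms] by simp
  with ab(1) show False by simp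
qed

lemma exists_rayleigh_inner_less:
  assumes s: "s \<in> measure_support \<mu>" and sb: "inner a s < b"
  shows "\<exists>v\<in>c00. v \<noteq> (\<lambda>_. 0) \<and> inner a (rayleigh v) < b"
proof -
  obtain L where L: "\<And>z. z \<in> measure_support \<mu> \<Longrightarrow> cmod z \<le> L"
    using bounded_support by (auto simp: bounded_pos)
  define \<delta> where "\<delta> = b - inner a s"
  define T where "T = cmod a * L"
  define K where "K = \<bar>b\<bar> + T + T\<^sup>2 / \<delta> + 1"
  define \<epsilon> where "\<epsilon> = \<delta> / (2 * (cmod a + 1))"
  define q where "q z = cmod (of_real K - cnj a * z) ^ 2" for z
  have "\<delta> > 0" "T \<ge> 0" using sb L[OF s] by (auto simp: \<delta>_def T_def order_trans[OF norm_ge_zero])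
  moreover have "0 \<le> T\<^sup>2 / \<delta>" using \<open>\<delta> > 0\<close> by simp
  ultimately have "K \<noteq> 0"
    unfolding K_def using abs_ge_zero[of b] by linarith
  have "\<exists>n. (\<integral>z. (inner a z - b) * q z ^ n \<partial>\<mu>) < 0"
  proof (rule integral_mult_power_neg)
    show "integrable \<mu> (\<lambda>z. (inner a z - b) * q z ^ n)" for n
      unfolding q_def by (intro integrable_continuous continuous_intros)
    have "\<epsilon> > 0"
      unfolding \<epsilon>_def using \<open>\<delta> > 0\<close> by (intro divide_pos_pos) (auto intro: add_nonneg_pos)
    then show "measure \<mu> (ball s \<epsilon>) > 0"
      using s by (auto simp: measure_support_def emeasure_eq_measure)
    show "AE z in \<mu>. 0 \<le> q z \<and> inner a z - b \<le> T + \<bar>b\<bar>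
        \<and> (z \<in> ball s \<epsilon> \<longrightarrow> inner a z - b \<le> - (\<delta> / 2) \<and> (K - b + \<delta> / 2)\<^sup>2 \<le> q z)
        \<and> (0 < inner a z - b \<longrightarrow> q z \<le> (K - b)\<^sup>2 + T\<^sup>2)"
      using AE_measure_support[OF sets_eq_borel]
    proof eventually_elim
      case (elim z)
      show ?case
        using peak_weight_bounds(1-3)[OF L[OF elim] sb, folded \<delta>_def T_def, folded K_def \<epsilon>_def]
        by (simp add: q_def)
    qed
    show "(K - b)\<^sup>2 + T\<^sup>2 < (K - b + \<delta> / 2)\<^sup>2"
      using peak_weight_bounds(4)[OF L[OF s] sb, folded \<delta>_def T_def, folded K_def] .
  qed (use \<open>\<delta> > 0\<close> in auto)
  then obtain n where n: "(\<integral>z. (inner a z - b) * q z ^ n \<partial>\<mu>) < 0" ..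
  obtain v where v: "v \<in> c00" "v \<noteq> (\<lambda>_. 0)" "\<And>z. c00_poly v z = (of_real K - cnj a * z) ^ n"
    using c00_poly_binomial \<open>K \<noteq> 0\<close> by (metis of_real_eq_0_iff)
  have "cmod (c00_poly v z) ^ 2 = q z ^ n" for z
    by (simp add: v(3) q_def norm_power power_mult[symmetric] mult.commute)
  then have "inner a (rayleigh v) - b < 0"
    using n poly_norm2_pos[OF v(1,2)] by (simp add: inner_rayleigh[OF v(1,2)] divide_neg_pos)
  then show ?thesis using v by auto
qed

lemma rayleigh_eq: "rayleigh v = poly_inner (\<lambda>z. z) v v / poly_inner (\<lambda>_. 1) v v"
  by (simp add: rayleigh_def poly_inner_one)

lemma quad_form_cmoment_div:
  assumes "v \<in> c00"
  shows "quad_form (\<lambda>i j. cmoment \<mu> (Suc i) j) v / quad_form (cmoment \<mu>) v = rayleigh v"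
  using quad_form_moments[OF assms continuous_on_id]
    quad_form_moments[OF assms continuous_on_const[of UNIV 1]]
  by (simp add: cmoment_def[abs_def] rayleigh_eq mult.assoc)

lemma rayleigh_scale:
  assumes "x \<in> c00" "l \<noteq> 0"
  shows "rayleigh (\<lambda>i. l * x i) = rayleigh x"
proof -
  have "poly_inner \<psi> (\<lambda>i. l * x i) (\<lambda>i. l * x i) = l * cnj l * poly_inner \<psi> x x"
    if "continuous_on UNIV \<psi>" for \<psi>
    using poly_inner_lincomb[OF assms(1) assms(1) that, of l 0] by simp
  then show ?thesis
    using assms(2) by (simp add: rayleigh_eq continuous_on_id)
qed

lemma lincomb_nonzero_of_rayleigh_ne:
  assumes x: "x \<in> c00" "x \<noteq> (\<lambda>_. 0)" and y: "y \<in> c00" "y \<noteq> (\<lambda>_. 0)"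
    and ne: "rayleigh x \<noteq> rayleigh y" and \<alpha>\<beta>: "\<alpha> \<noteq> 0 \<or> \<beta> \<noteq> 0"
  shows "(\<lambda>i. \<alpha> * x i + \<beta> * y i) \<noteq> (\<lambda>_. 0)"
proof
  assume "(\<lambda>i. \<alpha> * x i + \<beta> * y i) = (\<lambda>_. 0)"
  then have zero: "\<alpha> * x i + \<beta> * y i = 0" for i by meson
  show False
  proof (cases "\<beta> = 0")
    case True
    then show False using zero \<alpha>\<beta> x(2) by auto
  next
    case False
    then have y_eq: "y = (\<lambda>i. (- \<alpha> / \<beta>) * x i)"
      using zero by (auto simp: fun_eq_iff field_simps add_eq_0_iff)
    then have "- \<alpha> / \<beta> \<noteq> 0" using y(2) by auto
    then have "rayleigh y = rayleigh x" unfolding y_eq by (rule rayleigh_scale[OF x(1)])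
    with ne show False by simp
  qed
qed

lemma rayleigh_normalized:
  assumes "v \<in> c00" "v \<noteq> (\<lambda>_. 0)" "w1 \<noteq> w2"
  shows "(rayleigh v - w1) / (w2 - w1)
           = poly_inner (\<lambda>z. (z - w1) / (w2 - w1)) v v / of_real (poly_norm2 v)"
proof -
  have "(\<lambda>z. 1 / (w2 - w1) * z + - w1 / (w2 - w1)) = (\<lambda>z. (z - w1) / (w2 - w1))"
    by (simp add: diff_divide_distrib)
  then show ?thesis
    using rayleigh_affine[OF assms(1,2), of "1 / (w2 - w1)" "- w1 / (w2 - w1)"]
    by (simp add: diff_divide_distrib)
qed

lemma poly_inner_rotated_segment:
  assumes "x \<in> c00" "y \<in> c00" "continuous_on UNIV \<psi>" "c * cnj c = 1"
  shows "poly_inner \<psi> (rotated_segment x y c s) (rotated_segment x y c s)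
           = of_real ((1 - s)\<^sup>2) * poly_inner \<psi> x x + of_real (s\<^sup>2) * poly_inner \<psi> y y
             + of_real ((1 - s) * s) * (cnj c * poly_inner \<psi> x y + c * poly_inner \<psi> y x)"
proof -
  have "of_real s * c * cnj (of_real s * c) = of_real s * of_real s * (c * cnj c)"
    by (simp add: mult_ac)
  then show ?thesis
    using poly_inner_lincomb[OF assms(1-3), of "of_real (1 - s)" "of_real s * c"] assms(4)
    by (simp add: rotated_segment_def power2_eq_square algebra_simps)
qed

lemma poly_norm2_rotated_segment:
  assumes "x \<in> c00" "y \<in> c00" "c * cnj c = 1"
  shows "poly_norm2 (rotated_segment x y c s)
           = (1 - s)\<^sup>2 * poly_norm2 x + s\<^sup>2 * poly_norm2 y
             + (1 - s) * s * Re (cnj c * poly_inner (\<lambda>_. 1) x y + c * poly_inner (\<lambda>_. 1) y x)"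
  using arg_cong[OF poly_inner_rotated_segment[OF assms(1,2) continuous_on_const[of UNIV 1] assms(3), of s],
      of Re]
  by (simp add: poly_inner_one)

lemma rotated_segment_nonzero:
  assumes x: "x \<in> c00" "x \<noteq> (\<lambda>_. 0)" and y: "y \<in> c00" "y \<noteq> (\<lambda>_. 0)"
    and ne: "rayleigh x \<noteq> rayleigh y" and "c \<noteq> 0" "0 \<le> s" "s \<le> 1"
  shows "rotated_segment x y c s \<in> c00" "rotated_segment x y c s \<noteq> (\<lambda>_. 0)"
proof -
  have "of_real (1 - s) \<noteq> (0 :: complex) \<or> of_real s * c \<noteq> 0"
    using assms(6) by (cases "s = 1") auto
  then show "rotated_segment x y c s \<in> c00" "rotated_segment x y c s \<noteq> (\<lambda>_. 0)"
    unfolding rotated_segment_def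
    using lincomb_nonzero_of_rayleigh_ne[OF x y ne] c00_lincomb[OF x(1) y(1)] by blast+
qed

text \<open>Toeplitz--Hausdorff: rotating \<open>y\<close> by a unimodular \<open>c\<close> makes the cross terms of the
  normalized form real, so along \<open>(1 - s) x + s c y\<close> the normalized quotient runs through a real
  continuous path from \<open>0\<close> to \<open>1\<close>.\<close>
lemma rayleigh_rotated_segment_path:
  assumes x: "x \<in> c00" "x \<noteq> (\<lambda>_. 0)" and y: "y \<in> c00" "y \<noteq> (\<lambda>_. 0)"
    and ne: "rayleigh x \<noteq> rayleigh y"
  obtains h c where "continuous_on {0..1} h" "h 0 = 0" "h 1 = 1"
    and "\<And>s. 0 \<le> s \<Longrightarrow> s \<le> 1 \<Longrightarrow>
      rotated_segment x y c s \<in> c00 \<and> rotated_segment x y c s \<noteq> (\<lambda>_. 0) \<and>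
      (rayleigh (rotated_segment x y c s) - rayleigh x) / (rayleigh y - rayleigh x) = of_real (h s)"
proof -
  define \<psi> where "\<psi> z = (z - rayleigh x) / (rayleigh y - rayleigh x)" for z
  have "continuous_on UNIV \<psi>"
    unfolding \<psi>_def using ne by (intro continuous_intros) auto
  have ratio: "poly_inner \<psi> v v / of_real (poly_norm2 v) = (rayleigh v - rayleigh x) / (rayleigh y - rayleigh x)"
    if "v \<in> c00" "v \<noteq> (\<lambda>_. 0)" for v
    using rayleigh_normalized[OF that ne] by (simp add: \<psi>_def[abs_def])
  have \<psi>xx: "poly_inner \<psi> x x = 0" and \<psi>yy: "poly_inner \<psi> y y = of_real (poly_norm2 y)"
    using ratio[OF x] ratio[OF y] poly_norm2_pos[OF x] poly_norm2_pos[OF y] ne by simp_all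
  obtain c where c: "c * cnj c = 1" "Im (cnj c * (poly_inner \<psi> x y - cnj (poly_inner \<psi> y x))) = 0"
    by (rule exists_unimodular_rotation_real)
  then have "c \<noteq> 0" by auto
  define \<kappa> where "\<kappa> = cnj c * poly_inner \<psi> x y + c * poly_inner \<psi> y x"
  have "Im \<kappa> = 0" using c(2) by (simp add: \<kappa>_def algebra_simps)
  then have \<kappa>: "\<kappa> = of_real (Re \<kappa>)" by (simp add: complex_eq_iff)
  define v where "v = rotated_segment x y c"
  define D where "D s = poly_norm2 (v s)" for s
  define Num where "Num s = s\<^sup>2 * poly_norm2 y + (1 - s) * s * Re \<kappa>" for s
  have v: "v s \<in> c00 \<and> v s \<noteq> (\<lambda>_. 0)" if "0 \<le> s" "s \<le> 1" for s
    using rotated_segment_nonzero[OF x y ne \<open>c \<noteq> 0\<close> that] by (simp add: v_def)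
  have Num: "poly_inner \<psi> (v s) (v s) = of_real (Num s)" for s
    using poly_inner_rotated_segment[OF x(1) y(1) \<open>continuous_on UNIV \<psi>\<close> c(1), of s,
        folded v_def \<kappa>_def]
    unfolding \<psi>xx \<psi>yy by (subst (asm) \<kappa>) (simp add: Num_def)
  have D_pos: "D s > 0" if "0 \<le> s" "s \<le> 1" for s
    using poly_norm2_pos[of "v s"] v[OF that] by (simp add: D_def)
  show ?thesis
  proof (rule that[of "\<lambda>s. Num s / D s" c])
    have "continuous_on {0..1} Num" "continuous_on {0..1} D"
      unfolding Num_def D_def v_def poly_norm2_rotated_segment[OF x(1) y(1) c(1)]
      by (intro continuous_intros)+
    then show "continuous_on {0..1} (\<lambda>s. Num s / D s)"
      using D_pos by (intro continuous_on_divide) (auto simp: less_le)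
    show "Num 0 / D 0 = 0" "Num 1 / D 1 = 1"
      using poly_norm2_pos[OF y] c(1)
      by (simp_all add: Num_def D_def v_def poly_norm2_rotated_segment[OF x(1) y(1) c(1)])
    fix s :: real assume "0 \<le> s" "s \<le> 1"
    then show "rotated_segment x y c s \<in> c00 \<and> rotated_segment x y c s \<noteq> (\<lambda>_. 0)
        \<and> (rayleigh (rotated_segment x y c s) - rayleigh x) / (rayleigh y - rayleigh x)
          = of_real (Num s / D s)"
      using ratio[of "v s"] v[of s] by (simp add: Num D_def flip: v_def)
  qed
qed

lemma rayleigh_segment:
  assumes x: "x \<in> c00" "x \<noteq> (\<lambda>_. 0)" and y: "y \<in> c00" "y \<noteq> (\<lambda>_. 0)"
    and t: "0 \<le> t" "t \<le> 1"
  shows "\<exists>v\<in>c00. v \<noteq> (\<lambda>_. 0) \<and> rayleigh v = of_real (1 - t) * rayleigh x + of_real t * rayleigh y"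
proof (cases "rayleigh x = rayleigh y")
  case True
  then have "rayleigh x = of_real (1 - t) * rayleigh x + of_real t * rayleigh y"
    by (simp add: algebra_simps)
  then show ?thesis using x by blast
next
  case ne: False
  obtain h c where h: "continuous_on {0..1} h" "h 0 = 0" "h 1 = 1"
    and path: "\<And>s. 0 \<le> s \<Longrightarrow> s \<le> 1 \<Longrightarrow>
      rotated_segment x y c s \<in> c00 \<and> rotated_segment x y c s \<noteq> (\<lambda>_. 0) \<and>
      (rayleigh (rotated_segment x y c s) - rayleigh x) / (rayleigh y - rayleigh x) = of_real (h s)"
    using rayleigh_rotated_segment_path[OF x y ne] by blast
  obtain s where s: "0 \<le> s" "s \<le> 1" "h s = t"
    using IVT'[of h 0 t 1] h t by auto
  with path[OF s(1,2)] ne show ?thesis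
    by (intro bexI[of _ "rotated_segment x y c s"]) (auto simp: field_simps)
qed

lemma convex_rayleigh_range: "convex {rayleigh v | v. v \<in> c00 \<and> v \<noteq> (\<lambda>_. 0)}"
proof (rule convexI)
  fix p q :: complex and u w :: real
  assume "p \<in> {rayleigh v | v. v \<in> c00 \<and> v \<noteq> (\<lambda>_. 0)}" "q \<in> {rayleigh v | v. v \<in> c00 \<and> v \<noteq> (\<lambda>_. 0)}"
    and uw: "0 \<le> u" "0 \<le> w" "u + w = 1"
  then obtain x y where x: "x \<in> c00" "x \<noteq> (\<lambda>_. 0)" "p = rayleigh x"
    and y: "y \<in> c00" "y \<noteq> (\<lambda>_. 0)" "q = rayleigh y" by blast
  obtain v where v: "v \<in> c00" "v \<noteq> (\<lambda>_. 0)"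
    and "rayleigh v = of_real (1 - w) * p + of_real w * q"
    using rayleigh_segment[OF x(1,2) y(1,2), of w] uw x(3) y(3) by auto
  moreover have "u = 1 - w" using uw by simp
  ultimately have "u *\<^sub>R p + w *\<^sub>R q = rayleigh v"
    by (simp add: scaleR_conv_of_real)
  then show "u *\<^sub>R p + w *\<^sub>R q \<in> {rayleigh v | v. v \<in> c00 \<and> v \<noteq> (\<lambda>_. 0)}"
    using v by blast
qed

lemma closure_rayleigh_range:
  "closure {rayleigh v | v. v \<in> c00 \<and> v \<noteq> (\<lambda>_. 0)} = convex hull measure_support \<mu>"
    (is "closure ?W = ?H")
proof
  show "closure ?W \<subseteq> ?H"
    using rayleigh_in_convex_hull compact_imp_closed[OF compact_convex_hull[OF compact_support]]
    by (intro closure_minimal) auto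
  show "?H \<subseteq> closure ?W"
  proof
    fix z assume z: "z \<in> ?H"
    show "z \<in> closure ?W"
    proof (rule ccontr)
      assume "z \<notin> closure ?W"
      then have "\<exists>a b. inner a z < b \<and> (\<forall>x\<in>closure ?W. b < inner a x)"
        by (rule separating_hyperplane_closed_point[OF convex_closure[OF convex_rayleigh_range]
              closed_closure])
      then obtain a b where ab: "inner a z < b" "\<forall>x\<in>closure ?W. b < inner a x" by blast
      have "\<not> measure_support \<mu> \<subseteq> {x. b \<le> inner a x}"
      proof
        assume "measure_support \<mu> \<subseteq> {x. b \<le> inner a x}"
        then have "?H \<subseteq> {x. b \<le> inner a x}"
          by (intro hull_minimal convex_halfspace_ge)
        with z ab(1) show False by auto
      qed
      then obtain s where "s \<in> measure_support \<mu>" "\<not> b \<le> inner a s" by blast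
      then obtain v where "v \<in> c00" "v \<noteq> (\<lambda>_. 0)" "inner a (rayleigh v) < b"
        using exists_rayleigh_inner_less not_le by blast
      moreover from this(1,2) have "rayleigh v \<in> closure ?W" by (intro closure_subset[THEN subsetD]) blast
      ultimately show False using ab(2) by force
    qed
  qed
qed

end

theorem theorem2:
  fixes \<mu> :: "complex measure"
  assumes borel: "sets \<mu> = sets borel"
    and inf_supp: "infinite (measure_support \<mu>)"
    and moments: "\<forall>n. integrable \<mu> (\<lambda>z. cmod z ^ n)"
    and growth: "\<exists>L::real. (\<lambda>n. root (2 * n) (Re (cmoment \<mu> n n))) \<longlonglongrightarrow> L"
  shows "closure {quad_form (\<lambda>i j. cmoment \<mu> (Suc i) j) v / quad_form (cmoment \<mu>) v
                   | v. v \<in> c00 \<and> v \<noteq> (\<lambda>_. 0)}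
         = convex hull (measure_support \<mu>)"
proof -
  obtain L where lim: "(\<lambda>n. root (2 * n) (Re (cmoment \<mu> n n))) \<longlonglongrightarrow> L" using growth by blast
  have fin: "finite_measure \<mu>"
    using moments[rule_format, of 0] by (simp add: finite_measure_of_integrable_one)
  have "bounded (measure_support \<mu>)"
    using measure_support_subset_cball[OF fin borel moments lim] bounded_cball bounded_subset by blast
  then interpret moment_measure \<mu>
    using fin borel inf_supp by (simp add: moment_measure_def moment_measure_axioms_def)
  have "(\<lambda>v. quad_form (\<lambda>i j. cmoment \<mu> (Suc i) j) v / quad_form (cmoment \<mu>) v)
               ` {v. v \<in> c00 \<and> v \<noteq> (\<lambda>_. 0)} = rayleigh ` {v. v \<in> c00 \<and> v \<noteq> (\<lambda>_. 0)}"
    by (intro image_cong) (simp_all add: quad_form_cmoment_div)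
  then show ?thesis
    using closure_rayleigh_range by (simp only: setcompr_eq_image)
qed

end
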